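(* Let $\sigma=(a_1,\ldots,a_s)$ be a partition of the positive integer $r$ with $a_1\ge a_2\ge\cdots\ge a_s\ge 1$, let $n\ge s$ and $q\ge a_1$, and let $H=H(n,r,q\mid\sigma)$. Let $1\le k\le r-1$. Then \[\alpha_k(H)=\max\Big\{\, q\,(t(B)-1)+\sum_{i=t(B)}^{s} b_i+(n-s)\,b_s \;:\; B=(b_1,\ldots,b_n)\in M(q,k,\sigma)\Big\}.\]
   Context: A $\sigma$-hypergraph $H=H(n,r,q\mid\sigma)$, for a partition $\sigma=(a_1,\ldots,a_s)$ of $r$ with $s=s(\sigma)$ parts, is the $r$-uniform hypergraph whose vertex set is the disjoint union of $n$ classes $V_1,\ldots,V_n$, each of size $q$; an $r$-subset $K$ of vertices is an edge iff the multiset of non-zero values $|K\cap V_i|$ ($1\le i\le n$) equals $\sigma$. For $1\le k\le r-1$, a set $S$ of vertices of an $r$-uniform hypergraph is $k$-independent if $|E\cap S|\le k$ for every edge $E$; $\alpha_k(H)$ is the largest cardinality of a $k$-independent set. A sequence $B=(b_1,\ldots,b_n)$ of non-negative integers is $(q,k,\sigma)$-feasible if $b_1\ge b_2\ge\cdots\ge b_n$, $b_j=b_s$ for all $j\ge s$, $q\ge\max\{a_1,b_1\}$, and $\sum_{i=1}^{s}\min\{a_i,b_i\}=k$. A feasible sequence $B^*$ dominates a feasible sequence $B$ if $b^*_i\ge b_i$ for all $i$ and $\sum_i b^*_i>\sum_i b_i$; a feasible sequence is maximal if no feasible sequence dominates it. $M(q,k,\sigma)$ is the set of all maximal $(q,k,\sigma)$-feasible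 sequences. For a feasible sequence $B$, $t(B)$ denotes the smallest index $t\in\{1,\ldots,s\}$ with $b_t<a_t$ (such an index exists since $k<r$). *)

theory Defs
  imports Main "HOL-Library.Multiset"
begin

text \<open>Conventions: the partition sigma = (a_1,...,a_s) is the list a (0-based, so
a_i = a ! (i-1)); a sequence B = (b_1,...,b_n) is a list of length n (b_i = B ! (i-1)).\<close>

definition sigma_vertices :: "nat \<Rightarrow> nat \<Rightarrow> (nat \<times> nat) set" where
  "sigma_vertices n q = {1..n} \<times> {..<q}"

definition vclass :: "nat \<Rightarrow> nat \<Rightarrow> (nat \<times> nat) set" where
  "vclass q i = {i} \<times> {..<q}"

definition sigma_edges :: "nat \<Rightarrow> nat \<Rightarrow> nat list \<Rightarrow> (nat \<times> nat) set set" where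
  "sigma_edges n q a = {K. K \<subseteq> sigma_vertices n q \<and> card K = sum_list a \<and>
     filter_mset (\<lambda>x. x \<noteq> 0) (image_mset (\<lambda>i. card (K \<inter> vclass q i)) (mset_set {1..n}))
       = mset a}"

definition k_independent :: "'v set set \<Rightarrow> nat \<Rightarrow> 'v set \<Rightarrow> bool" where
  "k_independent E k S \<longleftrightarrow> (\<forall>e\<in>E. card (e \<inter> S) \<le> k)"

definition alpha_k :: "nat \<Rightarrow> 'v set \<Rightarrow> 'v set set \<Rightarrow> nat" where
  "alpha_k k V E = Max {card S | S. S \<subseteq> V \<and> k_independent E k S}"

definition feasible :: "nat \<Rightarrow> nat \<Rightarrow> nat list \<Rightarrow> nat \<Rightarrow> nat list \<Rightarrow> bool" where
  "feasible q k a n B \<longleftrightarrow>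
     length B = n \<and> sorted_wrt (\<ge>) B \<and>
     (\<forall>j. length a - 1 \<le> j \<and> j < n \<longrightarrow> B ! j = B ! (length a - 1)) \<and>
     max (a ! 0) (B ! 0) \<le> q \<and>
     (\<Sum>i<length a. min (a ! i) (B ! i)) = k"

definition dominates :: "nat list \<Rightarrow> nat list \<Rightarrow> bool" where
  "dominates B' B \<longleftrightarrow> (\<forall>i<length B. B ! i \<le> B' ! i) \<and> sum_list B < sum_list B'"

definition maximal_feasible :: "nat \<Rightarrow> nat \<Rightarrow> nat list \<Rightarrow> nat \<Rightarrow> nat list set" where
  "maximal_feasible q k a n =
     {B. feasible q k a n B \<and> \<not> (\<exists>B'. feasible q k a n B' \<and> dominates B' B)}"

definition t_index :: "nat list \<Rightarrow> nat list \<Rightarrow> nat" where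
  "t_index a B = (LEAST t. 1 \<le> t \<and> t \<le> length a \<and> B ! (t - 1) < a ! (t - 1))"

definition seq_value :: "nat \<Rightarrow> nat \<Rightarrow> nat list \<Rightarrow> nat list \<Rightarrow> nat" where
  "seq_value n q a B =
     (let s = length a; t = t_index a B in
       q * (t - 1) + (\<Sum>i = t..s. B ! (i - 1)) + (n - s) * B ! (s - 1))"

end

theory Submission
  imports Defs "HOL-Combinatorics.Permutations"
begin

(* Let S be a vertex set with class sizes d_1 >= ... >= d_n (after renumbering the classes).
   An edge meets S in at most sum_j min(a_j, d_j) vertices, by counting level by level, and
   placing the parts a_j of an edge into the classes in this order attains that bound.  So S is
   k-independent iff sum_j min(a_j, d_j) <= k, i.e. iff d, frozen after position s, has overlap
   at most k with sigma.  Raising such a sequence one unit at a time ends in a maximal feasible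
   sequence B above it, and |S| = sum_j d_j is at most the total of B after its first t(B) - 1
   entries are raised to q, which is exactly the value of B in the theorem.  Conversely that
   saturated sequence, taken as class sizes, is a k-independent set of this size, because the
   entries before t(B) already cover a_j and raising them does not increase the overlap. *)

lemma sorted_wrt_ge_nth_antimono:
  fixes xs :: "'a::order list"
  assumes "sorted_wrt (\<ge>) xs" "i \<le> j" "j < length xs"
  shows "xs ! j \<le> xs ! i"
  using assms sorted_wrt_nth_less[OF assms(1), of i j] by (cases "i = j") auto

lemma Max_eq_if_cofinal:
  fixes A B :: "'a::linorder set"
  assumes "finite A" "finite B" "B \<noteq> {}"
    and "\<And>x. x \<in> A \<Longrightarrow> \<exists>y\<in>B. x \<le> y" and "\<And>y. y \<in> B \<Longrightarrow> \<exists>x\<in>A. y \<le> x"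
  shows "Max A = Max B"
proof -
  have "A \<noteq> {}" using assms(3,5) by blast
  have "Max A \<le> Max B"
    using assms(4)[OF Max_in[OF assms(1) \<open>A \<noteq> {}\<close>]] Max_ge[OF assms(2)] by (meson order_trans)
  moreover have "Max B \<le> Max A"
    using assms(5)[OF Max_in[OF assms(2,3)]] Max_ge[OF assms(1)] by (meson order_trans)
  ultimately show ?thesis by simp
qed

section \<open>Counting by levels\<close>

lemma card_Int_downward_closed:
  fixes X Y :: "nat set"
  assumes "finite X" "finite Y"
    and "\<And>x y. x \<in> X \<Longrightarrow> y < x \<Longrightarrow> y \<in> X" "\<And>x y. x \<in> Y \<Longrightarrow> y < x \<Longrightarrow> y \<in> Y"
  shows "card (X \<inter> Y) = min (card X) (card Y)"
proof -
  have "X \<subseteq> Y \<or> Y \<subseteq> X"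
    using assms(3,4) by (metis linorder_neqE_nat subsetI)
  then show ?thesis
    using card_mono[OF assms(1)] card_mono[OF assms(2)] by (auto simp: Int_absorb1 Int_absorb2)
qed

lemma sum_min_eq_sum_levels:
  fixes f g :: "'a \<Rightarrow> nat"
  assumes "finite I" "\<And>i. i \<in> I \<Longrightarrow> g i \<le> q"
  shows "(\<Sum>i\<in>I. min (f i) (g i)) = (\<Sum>h<q. card {i\<in>I. h < f i \<and> h < g i})"
proof -
  have "(\<Sum>i\<in>I. min (f i) (g i)) = (\<Sum>i\<in>I. \<Sum>h<q. of_bool (h < f i \<and> h < g i))"
  proof (rule sum.cong[OF refl])
    fix i assume "i \<in> I"
    then have "{..<q} \<inter> {h. h < f i \<and> h < g i} = {..<min (f i) (g i)}"
      using assms(2)[of i] by auto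
    then show "min (f i) (g i) = (\<Sum>h<q. of_bool (h < f i \<and> h < g i))"
      by (simp add: sum.If_cases)
  qed
  also have "\<dots> = (\<Sum>h<q. \<Sum>i\<in>I. of_bool (h < f i \<and> h < g i))"
    by (rule sum.swap)
  also have "\<dots> = (\<Sum>h<q. card {i\<in>I. h < f i \<and> h < g i})"
    using assms(1) by (simp add: sum.If_cases Int_def)
  finally show ?thesis .
qed

lemma card_exceeding_eq_parts:
  fixes e :: "'a \<Rightarrow> nat"
  assumes "finite A" and parts: "filter_mset (\<lambda>x. x \<noteq> 0) (image_mset e (mset_set A)) = mset a"
  shows "card {i\<in>A. h < e i} = card {j. j < length a \<and> h < a ! j}"
proof -
  have "card {i\<in>A. h < e i} = size (filter_mset (\<lambda>x. h < x) (image_mset e (mset_set A)))"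
    using assms(1) by (simp flip: image_mset_filter_mset_swap)
  also have "\<dots> = size (filter_mset (\<lambda>x. h < x) (filter_mset (\<lambda>x. x \<noteq> 0) (image_mset e (mset_set A))))"
  proof -
    have "(\<lambda>x::nat. x \<noteq> 0 \<and> h < x) = (\<lambda>x. h < x)" by auto
    then show ?thesis by (simp only: filter_filter_mset)
  qed
  also have "\<dots> = length (filter (\<lambda>x. h < x) a)"
    unfolding parts by (simp flip: mset_filter)
  also have "\<dots> = card {j. j < length a \<and> h < a ! j}"
    by (rule length_filter_conv_card)
  finally show ?thesis .
qed

(* At height h the left side counts indices j with e_j > h and c_j > h; there are at most as
   many as parts a_j > h and as indices with c_j > h, and on the right both index sets are
   initial segments, so their intersection attains the smaller of the two. *)
lemma card_level_le_parts:
  fixes e c :: "nat \<Rightarrow> nat"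
  assumes parts: "filter_mset (\<lambda>x. x \<noteq> 0) (image_mset e (mset_set {..<n})) = mset a"
    and a_sorted: "sorted_wrt (\<ge>) a" and a_len: "length a \<le> n"
    and c_antimono: "\<And>i j. i \<le> j \<Longrightarrow> j < n \<Longrightarrow> c j \<le> c i"
  shows "card {j\<in>{..<n}. h < e j \<and> h < c j} \<le> card {j\<in>{..<length a}. h < a ! j \<and> h < c j}"
proof -
  define X where "X = {j. j < length a \<and> h < a ! j}"
  define Y where "Y = {j. j < n \<and> h < c j}"
  have "card {j\<in>{..<n}. h < e j \<and> h < c j} \<le> card {j\<in>{..<n}. h < e j}"
    by (rule card_mono) auto
  also have "\<dots> = card X"
    unfolding X_def by (rule card_exceeding_eq_parts[OF _ parts]) simp
  finally have "card {j\<in>{..<n}. h < e j \<and> h < c j} \<le> card X" .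
  moreover have "card {j\<in>{..<n}. h < e j \<and> h < c j} \<le> card Y"
    unfolding Y_def by (rule card_mono) auto
  moreover have "card (X \<inter> Y) = min (card X) (card Y)"
  proof (rule card_Int_downward_closed)
    show "y \<in> X" if "x \<in> X" "y < x" for x y
    proof -
      have "a ! x \<le> a ! y"
        using sorted_wrt_nth_less[OF a_sorted, of y x] that by (simp add: X_def)
      then show ?thesis using that by (simp add: X_def)
    qed
    show "y \<in> Y" if "x \<in> Y" "y < x" for x y
    proof -
      have "c x \<le> c y" using c_antimono[of y x] that by (simp add: Y_def)
      then show ?thesis using that by (simp add: Y_def)
    qed
  qed (auto simp: X_def Y_def)
  moreover have "X \<inter> Y = {j\<in>{..<length a}. h < a ! j \<and> h < c j}"
    unfolding X_def Y_def using a_len by auto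
  ultimately show ?thesis by simp
qed

lemma sum_min_rearrangement:
  fixes e c :: "nat \<Rightarrow> nat"
  assumes parts: "filter_mset (\<lambda>x. x \<noteq> 0) (image_mset e (mset_set {..<n})) = mset a"
    and a_sorted: "sorted_wrt (\<ge>) a" and a_len: "length a \<le> n"
    and c_antimono: "\<And>i j. i \<le> j \<Longrightarrow> j < n \<Longrightarrow> c j \<le> c i"
  shows "(\<Sum>j<n. min (e j) (c j)) \<le> (\<Sum>j<length a. min (a ! j) (c j))"
proof -
  have c_le: "c j \<le> c 0" if "j < n" for j
    using c_antimono[of 0 j] that by simp
  have "(\<Sum>j<n. min (e j) (c j)) = (\<Sum>h<c 0. card {j\<in>{..<n}. h < e j \<and> h < c j})"
    by (rule sum_min_eq_sum_levels) (use c_le in auto)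
  also have "\<dots> \<le> (\<Sum>h<c 0. card {j\<in>{..<length a}. h < a ! j \<and> h < c j})"
    by (intro sum_mono card_level_le_parts[OF parts a_sorted a_len c_antimono])
  also have "\<dots> = (\<Sum>j<length a. min (a ! j) (c j))"
    by (rule sum_min_eq_sum_levels[symmetric]) (use c_le a_len in auto)
  finally show ?thesis .
qed

section \<open>Vertex classes and edges\<close>

lemma finite_vclass: "finite (vclass q i)"
  by (simp add: vclass_def)

lemma card_vclass: "card (vclass q i) = q"
  by (simp add: vclass_def card_cartesian_product)

lemma card_Int_vclass_le: "card (X \<inter> vclass q i) \<le> q"
  using card_mono[OF finite_vclass Int_lower2] by (simp add: card_vclass)

lemma card_eq_sum_vclass:
  assumes "X \<subseteq> sigma_vertices n q" and I: "bij_betw I {..<n} {1..n}"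
  shows "card X = (\<Sum>j<n. card (X \<inter> vclass q (I j)))"
proof -
  have "X = (\<Union>i\<in>{1..n}. X \<inter> vclass q i)"
    using assms(1) by (auto simp: sigma_vertices_def vclass_def)
  then have "card X = card (\<Union>i\<in>{1..n}. X \<inter> vclass q i)"
    by (rule arg_cong)
  also have "\<dots> = (\<Sum>i\<in>{1..n}. card (X \<inter> vclass q i))"
    by (rule card_UN_disjoint) (auto simp: vclass_def)
  also have "\<dots> = (\<Sum>j<n. card (X \<inter> vclass q (I j)))"
    by (rule sum.reindex_bij_betw[OF I, symmetric])
  finally show ?thesis .
qed

lemma bij_betw_Suc_lessThan: "bij_betw Suc {..<n} {1..n}"
  by (simp add: image_Suc_lessThan)

lemma edge_overlap_le:
  assumes E: "E \<in> sigma_edges n q a"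
    and a_sorted: "sorted_wrt (\<ge>) a" and a_len: "length a \<le> n"
    and S_le: "\<And>j. j < n \<Longrightarrow> card (S \<inter> vclass q (Suc j)) \<le> c j"
    and c_antimono: "\<And>i j. i \<le> j \<Longrightarrow> j < n \<Longrightarrow> c j \<le> c i"
  shows "card (E \<inter> S) \<le> (\<Sum>j<length a. min (a ! j) (c j))"
proof -
  have E_sub: "E \<subseteq> sigma_vertices n q"
    and "filter_mset (\<lambda>x. x \<noteq> 0) (image_mset (\<lambda>i. card (E \<inter> vclass q i)) (mset_set {1..n})) = mset a"
    using E by (auto simp: sigma_edges_def)
  moreover have "mset_set {1..n} = image_mset Suc (mset_set {..<n})"
    by (simp add: image_mset_mset_set image_Suc_lessThan)
  ultimately have parts: "filter_mset (\<lambda>x. x \<noteq> 0)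
      (image_mset (\<lambda>j. card (E \<inter> vclass q (Suc j))) (mset_set {..<n})) = mset a"
    by (simp add: multiset.map_comp comp_def)
  have "card (E \<inter> S) = (\<Sum>j<n. card (E \<inter> S \<inter> vclass q (Suc j)))"
    using E_sub by (intro card_eq_sum_vclass bij_betw_Suc_lessThan) auto
  also have "\<dots> \<le> (\<Sum>j<n. min (card (E \<inter> vclass q (Suc j))) (c j))"
  proof (rule sum_mono)
    fix j assume "j \<in> {..<n}"
    have "card (E \<inter> S \<inter> vclass q (Suc j)) \<le> card (E \<inter> vclass q (Suc j))"
      by (rule card_mono) (auto simp: vclass_def)
    moreover have "card (E \<inter> S \<inter> vclass q (Suc j)) \<le> card (S \<inter> vclass q (Suc j))"
      by (rule card_mono) (auto simp: vclass_def)
    ultimately show "card (E \<inter> S \<inter> vclass q (Suc j)) \<le> min (card (E \<inter> vclass q (Suc j))) (c j)"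
      using S_le[of j] \<open>j \<in> {..<n}\<close> by simp
  qed
  also have "\<dots> \<le> (\<Sum>j<length a. min (a ! j) (c j))"
    by (rule sum_min_rearrangement[OF parts a_sorted a_len c_antimono])
  finally show ?thesis .
qed

lemma sigma_edge_of_class_sizes:
  assumes K: "K \<subseteq> sigma_vertices n q" and I: "bij_betw I {..<n} {1..n}"
    and a_len: "length a \<le> n" and a_pos: "\<forall>x\<in>set a. 1 \<le> x"
    and K_I: "\<And>j. j < n \<Longrightarrow> card (K \<inter> vclass q (I j)) = (if j < length a then a ! j else 0)"
  shows "K \<in> sigma_edges n q a"
proof -
  define g where "g j = (if j < length a then a ! j else 0)" for j
  have g_list: "map g [0..<n] = a @ replicate (n - length a) 0"
    using a_len by (intro nth_equalityI) (auto simp: g_def nth_append)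
  have "card K = (\<Sum>j<n. g j)"
    using card_eq_sum_vclass[OF K I] K_I by (simp add: g_def)
  also have "\<dots> = sum_list a"
    using arg_cong[OF g_list, of sum_list] by (simp add: sum_list_distinct_conv_sum_set atLeast0LessThan)
  finally have card_K: "card K = sum_list a" .
  have "image_mset (\<lambda>i. card (K \<inter> vclass q i)) (mset_set {1..n})
      = image_mset (\<lambda>i. card (K \<inter> vclass q i)) (image_mset I (mset_set {..<n}))"
    using I by (simp add: bij_betw_def image_mset_mset_set)
  also have "\<dots> = image_mset g (mset_set {..<n})"
    unfolding multiset.map_comp by (rule image_mset_cong) (simp add: K_I g_def)
  also have "\<dots> = mset a + replicate_mset (n - length a) 0"
    by (metis g_list mset_append mset_map mset_replicate mset_set_upto_eq_mset_upto)
  finally have classes: "image_mset (\<lambda>i. card (K \<inter> vclass q i)) (mset_set {1..n})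
      = mset (a @ replicate (n - length a) 0)"
    by simp
  have "filter (\<lambda>x. x \<noteq> 0) (a @ replicate (n - length a) 0) = a"
    using a_pos by (simp add: filter_True Suc_le_eq)
  then have "filter_mset (\<lambda>x. x \<noteq> 0) (image_mset (\<lambda>i. card (K \<inter> vclass q i)) (mset_set {1..n})) = mset a"
    unfolding classes by (metis mset_filter)
  then show ?thesis
    using K card_K by (simp add: sigma_edges_def)
qed

lemma obtain_subset_with_overlap:
  assumes "finite V" "m \<le> card V"
  obtains F where "F \<subseteq> V" "card F = m" "card (F \<inter> S) = min m (card (S \<inter> V))"
proof -
  have fin: "finite (S \<inter> V)" "finite (V - S)" using assms(1) by simp_all
  have "min m (card (S \<inter> V)) \<le> card (S \<inter> V)" by simp
  then obtain A where A: "A \<subseteq> S \<inter> V" "card A = min m (card (S \<inter> V))"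
    by (rule obtain_subset_with_card_n)
  have "card (V - S) = card V - card (V \<inter> S)"
    using assms(1) by (simp add: card_Diff_subset_Int)
  moreover have "V \<inter> S = S \<inter> V" by blast
  ultimately have "m - card A \<le> card (V - S)"
    using A(2) assms(2) by (cases "m \<le> card (S \<inter> V)") simp_all
  then obtain C where C: "C \<subseteq> V - S" "card C = m - card A"
    by (rule obtain_subset_with_card_n)
  have "finite A" "finite C" using A(1) C(1) fin finite_subset by blast+
  moreover have "A \<inter> C = {}" using A(1) C(1) by blast
  ultimately have card_AC: "card (A \<union> C) = m"
    using A(2) C(2) by (simp add: card_Un_disjoint)
  have "(A \<union> C) \<inter> S = A" using A(1) C(1) by blast
  then have "card ((A \<union> C) \<inter> S) = min m (card (S \<inter> V))"
    using A(2) by simp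
  moreover have "A \<union> C \<subseteq> V" using A(1) C(1) by blast
  ultimately show thesis
    using card_AC that by blast
qed

lemma UN_Int_vclass:
  fixes I :: "nat \<Rightarrow> nat"
  assumes "inj_on I {..<n}" "s \<le> n" "j < n" "\<And>j'. j' < s \<Longrightarrow> F j' \<subseteq> vclass q (I j')"
  shows "(\<Union>j'<s. F j') \<inter> vclass q (I j) = (if j < s then F j else {})"
proof -
  have "F j' \<inter> vclass q (I j) = (if j' = j then F j' else {})" if "j' < s" for j'
  proof (cases "j' = j")
    case True
    then show ?thesis using assms(4)[OF that] by auto
  next
    case False
    have "j' < n" using that assms(2) by linarith
    then have "I j' \<noteq> I j" using inj_onD[OF assms(1), of j' j] False assms(3) by auto
    then show ?thesis using assms(4)[OF that] False by (auto simp: vclass_def)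
  qed
  then have "(\<Union>j'<s. F j') \<inter> vclass q (I j) = (\<Union>j'<s. if j' = j then F j' else {})"
    unfolding UN_extend_simps(4) by (intro SUP_cong) simp_all
  then show ?thesis by auto
qed

lemma obtain_edge_meeting:
  assumes I: "bij_betw I {..<n} {1..n}" and a_len: "length a \<le> n"
    and a_pos: "\<forall>x\<in>set a. 1 \<le> x" and a_le: "\<And>j. j < length a \<Longrightarrow> a ! j \<le> q"
  obtains E where "E \<in> sigma_edges n q a"
    "card (E \<inter> S) = (\<Sum>j<length a. min (a ! j) (card (S \<inter> vclass q (I j))))"
proof -
  let ?s = "length a"
  have "\<forall>j\<in>{..<?s}. \<exists>F. F \<subseteq> vclass q (I j) \<and> card F = a ! j
            \<and> card (F \<inter> S) = min (a ! j) (card (S \<inter> vclass q (I j)))"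
  proof
    fix j assume "j \<in> {..<?s}"
    then have "a ! j \<le> card (vclass q (I j))"
      using a_le by (simp add: card_vclass)
    then obtain F where "F \<subseteq> vclass q (I j)" "card F = a ! j"
        "card (F \<inter> S) = min (a ! j) (card (S \<inter> vclass q (I j)))"
      by (rule obtain_subset_with_overlap[OF finite_vclass])
    then show "\<exists>F. F \<subseteq> vclass q (I j) \<and> card F = a ! j
            \<and> card (F \<inter> S) = min (a ! j) (card (S \<inter> vclass q (I j)))" by blast
  qed
  then obtain F where F: "\<And>j. j < ?s \<Longrightarrow> F j \<subseteq> vclass q (I j) \<and> card (F j) = a ! j
            \<and> card (F j \<inter> S) = min (a ! j) (card (S \<inter> vclass q (I j)))"
    using bchoice[of "{..<?s}"] by (metis lessThan_iff)
  define E where "E = (\<Union>j<?s. F j)"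
  have E_class: "E \<inter> vclass q (I j) = (if j < ?s then F j else {})" if "j < n" for j
    unfolding E_def using bij_betw_imp_inj_on[OF I] F a_len that by (intro UN_Int_vclass) auto
  have E_sub: "E \<subseteq> sigma_vertices n q"
  proof -
    have "vclass q (I j) \<subseteq> sigma_vertices n q" if "j < ?s" for j
      using I that a_len by (auto simp: bij_betw_def vclass_def sigma_vertices_def)
    then show ?thesis
      unfolding E_def using F by blast
  qed
  have "F i \<inter> F j = {}" if "i < ?s" "j < ?s" "i \<noteq> j" for i j
    using F[OF that(1)] F[OF that(2)] inj_onD[OF bij_betw_imp_inj_on[OF I], of i j] that a_len
    by (auto simp: vclass_def)
  moreover have "finite (F j \<inter> S)" if "j < ?s" for j
    using F[OF that] finite_subset[OF _ finite_vclass] by blast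
  ultimately have "card (E \<inter> S) = (\<Sum>j<?s. card (F j \<inter> S))"
    unfolding E_def UN_extend_simps(4) by (intro card_UN_disjoint) auto
  also have "\<dots> = (\<Sum>j<?s. min (a ! j) (card (S \<inter> vclass q (I j))))"
    using F by simp
  finally have "card (E \<inter> S) = (\<Sum>j<?s. min (a ! j) (card (S \<inter> vclass q (I j))))" .
  moreover have "E \<in> sigma_edges n q a"
    by (rule sigma_edge_of_class_sizes[OF E_sub I a_len a_pos]) (simp add: E_class F)
  ultimately show thesis
    by (rule that[rotated])
qed

lemma obtain_sorting_bijection:
  fixes f :: "nat \<Rightarrow> 'a::linorder"
  obtains I where "bij_betw I {..<n} {1..n}" "\<And>i j. i \<le> j \<Longrightarrow> j < n \<Longrightarrow> f (I j) \<le> f (I i)"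
proof -
  define L where "L = map (\<lambda>j. f (Suc j)) [0..<n]"
  define Ls where "Ls = rev (sort L)"
  obtain p where p: "p permutes {..<n}" "permute_list p L = Ls"
    using mset_eq_permutation[of Ls L] by (auto simp: Ls_def L_def)
  have "p permutes {..<length L}" using p(1) by (simp add: L_def)
  then have Ls_nth: "Ls ! j = f (Suc (p j))" if "j < n" for j
    using permute_list_nth[of p L j] p(2) permutes_in_image[OF p(1)] that by (simp add: L_def)
  have "bij_betw (Suc \<circ> p) {..<n} {1..n}"
    using permutes_imp_bij[OF p(1)] bij_betw_Suc_lessThan by (rule bij_betw_trans)
  moreover have "f (Suc (p j)) \<le> f (Suc (p i))" if "i \<le> j" "j < n" for i j
    using sorted_wrt_ge_nth_antimono[of Ls i j] that Ls_nth
    by (simp add: Ls_def L_def sorted_wrt_rev)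
  ultimately show thesis using that by auto
qed

section \<open>Feasible sequences\<close>

definition min_overlap :: "nat list \<Rightarrow> nat list \<Rightarrow> nat" where
  "min_overlap a B = (\<Sum>i<length a. min (a ! i) (B ! i))"

definition pre_feasible :: "nat \<Rightarrow> nat list \<Rightarrow> nat \<Rightarrow> nat list \<Rightarrow> bool" where
  "pre_feasible q a n B \<longleftrightarrow> length B = n \<and> sorted_wrt (\<ge>) B \<and>
     (\<forall>j. length a - 1 \<le> j \<and> j < n \<longrightarrow> B ! j = B ! (length a - 1)) \<and> B ! 0 \<le> q"

lemma feasible_iff_pre_feasible:
  "a ! 0 \<le> q \<Longrightarrow> feasible q k a n B \<longleftrightarrow> pre_feasible q a n B \<and> min_overlap a B = k"
  by (auto simp: feasible_def pre_feasible_def min_overlap_def)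

lemma pre_feasible_antimono:
  assumes "pre_feasible q a n B" "i \<le> j" "j < n"
  shows "B ! j \<le> B ! i"
  using assms unfolding pre_feasible_def by (intro sorted_wrt_ge_nth_antimono) simp_all

lemma pre_feasible_le:
  assumes "pre_feasible q a n B" "i < n"
  shows "B ! i \<le> q"
proof -
  have "B ! i \<le> B ! 0" using pre_feasible_antimono[OF assms(1) _ assms(2)] by simp
  moreover have "B ! 0 \<le> q" using assms(1) unfolding pre_feasible_def by blast
  ultimately show ?thesis by linarith
qed

lemma pre_feasible_tail:
  assumes "pre_feasible q a n B" "j < n"
  shows "B ! j = B ! min j (length a - 1)"
proof (cases "j \<le> length a - 1")
  case False
  then have "length a - 1 \<le> j" by simp
  then have "B ! j = B ! (length a - 1)"
    using assms unfolding pre_feasible_def by blast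
  then show ?thesis using False by (simp add: min_def)
qed simp

lemma pre_feasible_sum_list_le:
  assumes "pre_feasible q a n B"
  shows "sum_list B \<le> n * q"
proof -
  have "sum_list B = (\<Sum>i<n. B ! i)"
    using assms unfolding pre_feasible_def by (metis sum_list_sum_nth atLeast0LessThan)
  also have "\<dots> \<le> (\<Sum>i<n. q)"
    using pre_feasible_le[OF assms] by (intro sum_mono) simp
  finally show ?thesis by simp
qed

lemma t_index_le: "j < length a \<Longrightarrow> B ! j < a ! j \<Longrightarrow> t_index a B \<le> Suc j"
  unfolding t_index_def by (rule Least_le) simp

lemma t_index_props:
  assumes "min_overlap a B < sum_list a"
  shows "1 \<le> t_index a B" "t_index a B \<le> length a"
    and "B ! (t_index a B - 1) < a ! (t_index a B - 1)"
    and "\<And>i. i < t_index a B - 1 \<Longrightarrow> a ! i \<le> B ! i"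
proof -
  have "\<exists>j<length a. B ! j < a ! j"
  proof (rule ccontr)
    assume "\<not> ?thesis"
    then have "min (a ! i) (B ! i) = a ! i" if "i < length a" for i
      using that by (metis min_absorb1 not_less)
    then have "min_overlap a B = (\<Sum>i<length a. a ! i)"
      by (simp add: min_overlap_def)
    also have "\<dots> = sum_list a"
      by (simp add: sum_list_sum_nth atLeast0LessThan)
    finally show False using assms by simp
  qed
  then obtain j where j: "j < length a" "B ! j < a ! j" by blast
  let ?P = "\<lambda>t. 1 \<le> t \<and> t \<le> length a \<and> B ! (t - 1) < a ! (t - 1)"
  have P: "?P (t_index a B)"
    unfolding t_index_def by (rule LeastI[of ?P "Suc j"]) (use j in simp)
  then show "1 \<le> t_index a B" "t_index a B \<le> length a"
    and "B ! (t_index a B - 1) < a ! (t_index a B - 1)" by auto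
  show "a ! i \<le> B ! i" if "i < t_index a B - 1" for i
  proof (rule ccontr)
    assume "\<not> a ! i \<le> B ! i"
    then have "t_index a B \<le> Suc i"
      using that P by (intro t_index_le) auto
    with that show False by simp
  qed
qed

definition saturated :: "nat \<Rightarrow> nat list \<Rightarrow> nat list \<Rightarrow> nat \<Rightarrow> nat" where
  "saturated q a B j = (if j < t_index a B - 1 then q else B ! j)"

lemma saturated_le:
  "pre_feasible q a n B \<Longrightarrow> j < n \<Longrightarrow> saturated q a B j \<le> q"
  by (simp add: saturated_def pre_feasible_le)

lemma saturated_antimono:
  assumes "pre_feasible q a n B" "i \<le> j" "j < n"
  shows "saturated q a B j \<le> saturated q a B i"
  using assms pre_feasible_antimono[OF assms] saturated_le[OF assms(1,3)]
  by (auto simp: saturated_def)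

lemma min_overlap_saturated:
  assumes "sorted_wrt (\<ge>) a" "a ! 0 \<le> q" "min_overlap a B < sum_list a"
  shows "(\<Sum>j<length a. min (a ! j) (saturated q a B j)) = min_overlap a B"
  unfolding min_overlap_def
proof (rule sum.cong[OF refl])
  fix j assume "j \<in> {..<length a}"
  then have "a ! j \<le> q"
    using sorted_wrt_ge_nth_antimono[OF assms(1), of 0 j] assms(2) by simp
  then show "min (a ! j) (saturated q a B j) = min (a ! j) (B ! j)"
    using t_index_props(4)[OF assms(3), of j] by (simp add: saturated_def)
qed

lemma sum_atLeastAtMost_pred_shift:
  fixes m n :: nat
  assumes "1 \<le> m" "1 \<le> n"
  shows "(\<Sum>i=m..n. f (i - 1)) = (\<Sum>j=m-1..<n. f j)"
proof -
  obtain m0 n0 where "m = Suc m0" "n = Suc n0"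
    using assms by (cases m; cases n) auto
  then show ?thesis
    by (simp only: sum.shift_bounds_cl_Suc_ivl diff_Suc_1 atLeastLessThanSuc_atLeastAtMost)
qed

lemma seq_value_eq_sum_saturated:
  assumes B: "pre_feasible q a n B" and a_len: "length a \<le> n"
    and deficit: "min_overlap a B < sum_list a"
  shows "seq_value n q a B = (\<Sum>j<n. saturated q a B j)"
proof -
  define s where "s = length a"
  define t where "t = t_index a B"
  have t: "1 \<le> t" "t \<le> s" and "s \<le> n"
    using t_index_props[OF deficit] a_len by (simp_all add: s_def t_def)
  have "(\<Sum>j<n. saturated q a B j)
      = (\<Sum>j<t-1. saturated q a B j) + (\<Sum>j=t-1..<s. saturated q a B j) + (\<Sum>j=s..<n. saturated q a B j)"
    using sum.atLeastLessThan_concat[of 0 "t-1" s "saturated q a B"]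
      sum.atLeastLessThan_concat[of 0 s n "saturated q a B"] t \<open>s \<le> n\<close>
    by (simp add: atLeast0LessThan)
  also have "(\<Sum>j<t-1. saturated q a B j) = q * (t - 1)"
    by (simp add: saturated_def t_def)
  also have "(\<Sum>j=t-1..<s. saturated q a B j) = (\<Sum>i=t..s. B ! (i - 1))"
  proof -
    have "(\<Sum>j=t-1..<s. saturated q a B j) = (\<Sum>j=t-1..<s. B ! j)"
      by (simp add: saturated_def t_def)
    also have "\<dots> = (\<Sum>i=t..s. B ! (i - 1))"
      using t by (intro sum_atLeastAtMost_pred_shift[symmetric]) simp_all
    finally show ?thesis .
  qed
  also have "(\<Sum>j=s..<n. saturated q a B j) = (n - s) * B ! (s - 1)"
  proof -
    have "saturated q a B j = B ! (s - 1)" if "j \<in> {s..<n}" for j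
    proof -
      have "t_index a B - 1 \<le> j" using that t unfolding t_def atLeastLessThan_iff by linarith
      then have "saturated q a B j = B ! j" by (simp add: saturated_def)
      also have "\<dots> = B ! min j (length a - 1)" using pre_feasible_tail[OF B] that by simp
      also have "min j (length a - 1) = s - 1" using that unfolding s_def by auto
      finally show ?thesis .
    qed
    then show ?thesis by simp
  qed
  finally show ?thesis
    by (simp add: seq_value_def Let_def s_def t_def)
qed

lemma seq_value_mono:
  assumes B: "pre_feasible q a n B" and B': "pre_feasible q a n B'" and a_len: "length a \<le> n"
    and deficit: "min_overlap a B < sum_list a" and deficit': "min_overlap a B' < sum_list a"
    and le: "\<And>i. i < n \<Longrightarrow> B ! i \<le> B' ! i"
  shows "seq_value n q a B \<le> seq_value n q a B'"
proof -
  let ?t' = "t_index a B'"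
  have "B ! (?t' - 1) < a ! (?t' - 1)"
    using t_index_props[OF deficit'] le[of "?t' - 1"] a_len by fastforce
  then have "t_index a B \<le> ?t'"
    using t_index_le[of "?t' - 1" a B] t_index_props[OF deficit'] by simp
  then have "saturated q a B j \<le> saturated q a B' j" if "j < n" for j
    using le[OF that] pre_feasible_le[OF B that] by (auto simp: saturated_def)
  then have "(\<Sum>j<n. saturated q a B j) \<le> (\<Sum>j<n. saturated q a B' j)"
    by (intro sum_mono) simp
  then show ?thesis
    using seq_value_eq_sum_saturated[OF B a_len deficit] seq_value_eq_sum_saturated[OF B' a_len deficit']
    by simp
qed

(* Raising entry i0 alone would break the constant tail when i0 = length a - 1; then the
   whole tail is raised. *)
lemma pre_feasible_raise:
  assumes B: "pre_feasible q a n B" and s: "1 \<le> length a" "length a \<le> n"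
    and i0: "i0 < length a" "B ! i0 < q" and full: "\<And>i. i < i0 \<Longrightarrow> B ! i = q"
  shows "pre_feasible q a n (map (\<lambda>j. B ! j + of_bool (min j (length a - 1) = i0)) [0..<n])"
    (is "pre_feasible q a n ?B'")
proof -
  let ?bump = "\<lambda>j. min j (length a - 1) = i0"
  have B'_nth: "?B' ! j = B ! j + of_bool (?bump j)" if "j < n" for j
    using that by simp
  have B'_antimono: "?B' ! j \<le> ?B' ! i" if "i < j" "j < n" for i j
  proof (cases "?bump j \<and> \<not> ?bump i")
    case True
    then have "i < i0"
      using \<open>i < j\<close> i0(1) by (auto simp: min_def split: if_splits)
    moreover have "B ! j = B ! i0"
      using pre_feasible_tail[OF B \<open>j < n\<close>] True by simp
    ultimately show ?thesis
      using that True full i0(2) by (simp add: B'_nth)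
  next
    case False
    then show ?thesis
      using that pre_feasible_antimono[OF B, of i j] by (auto simp: B'_nth)
  qed
  show ?thesis
    unfolding pre_feasible_def sorted_wrt_iff_nth_less
  proof (intro conjI allI impI)
    show "length ?B' = n" by simp
    show "?B' ! j \<le> ?B' ! i" if "i < j" "j < length ?B'" for i j
      using that B'_antimono by simp
    show "?B' ! j = ?B' ! (length a - 1)" if "length a - 1 \<le> j \<and> j < n" for j
    proof -
      have min_j: "min j (length a - 1) = length a - 1" using that by simp
      then have "B ! j = B ! (length a - 1)" using pre_feasible_tail[OF B, of j] that by simp
      then show ?thesis using that s min_j by simp
    qed
    have "?bump 0 \<Longrightarrow> B ! 0 < q" using i0(2) by simp
    then show "?B' ! 0 \<le> q"
      using pre_feasible_le[OF B, of 0] s by (auto simp: B'_nth)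
  qed
qed

lemma pre_feasible_increment:
  assumes a_ne: "a \<noteq> []" and a_len: "length a \<le> n" and a_sorted: "sorted_wrt (\<ge>) a"
    and a_q: "a ! 0 \<le> q"
    and B: "pre_feasible q a n B" and deficit: "min_overlap a B < sum_list a"
  obtains B' where "pre_feasible q a n B'" "min_overlap a B' \<le> Suc (min_overlap a B)"
    "\<And>i. i < n \<Longrightarrow> B ! i \<le> B' ! i" "sum_list B < sum_list B'"
proof -
  define s where "s = length a"
  have s: "1 \<le> s" "s \<le> n" using a_ne a_len by (auto simp: s_def Suc_le_eq)
  define j0 where "j0 = t_index a B - 1"
  have j0: "j0 < s" "B ! j0 < a ! j0"
    using t_index_props[OF deficit] by (auto simp: j0_def s_def)
  then have "B ! j0 < q"
    using sorted_wrt_ge_nth_antimono[OF a_sorted, of 0 j0] a_q by (simp add: s_def)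
  define i0 where "i0 = (LEAST i. B ! i < q)"
  have i0: "B ! i0 < q" "i0 \<le> j0"
    unfolding i0_def using \<open>B ! j0 < q\<close> by (auto intro: LeastI Least_le)
  have full: "B ! i = q" if "i < i0" for i
  proof -
    have "\<not> B ! i < q" using that unfolding i0_def by (rule not_less_Least)
    moreover have "B ! i \<le> q" using pre_feasible_le[OF B] that i0 j0 s by simp
    ultimately show ?thesis by simp
  qed
  define bump where "bump j \<longleftrightarrow> min j (s - 1) = i0" for j
  define B' where "B' = map (\<lambda>j. B ! j + of_bool (bump j)) [0..<n]"
  have B'_nth: "B' ! j = B ! j + of_bool (bump j)" if "j < n" for j
    using that by (simp add: B'_def)
  have "pre_feasible q a n B'"
    unfolding B'_def bump_def s_def using i0 j0 s full by (intro pre_feasible_raise[OF B]) (auto simp: s_def)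
  moreover have "min_overlap a B' \<le> Suc (min_overlap a B)"
  proof -
    have "bump j \<longleftrightarrow> j = i0" if "j < s" for j
      using that by (simp add: bump_def min_absorb1)
    then have "min_overlap a B' \<le> (\<Sum>j<s. min (a ! j) (B ! j) + of_bool (j = i0))"
      unfolding min_overlap_def s_def[symmetric]
      using s by (intro sum_mono) (auto simp: B'_nth)
    also have "\<dots> = Suc (min_overlap a B)"
      using i0 j0 by (simp add: sum.distrib min_overlap_def s_def)
    finally show ?thesis .
  qed
  moreover have "B ! i \<le> B' ! i" if "i < n" for i
    using that by (simp add: B'_nth)
  moreover have "sum_list B < sum_list B'"
  proof -
    have "length B = n" using B unfolding pre_feasible_def by blast
    then have "sum_list B' = sum_list B + (\<Sum>j<n. of_bool (bump j))"
      by (simp add: B'_def sum_list_sum_nth atLeast0LessThan sum.distrib)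
    moreover have "(\<Sum>j<n. of_bool (bump j) :: nat) \<ge> of_bool (bump i0)"
      using i0 j0 s by (intro member_le_sum) auto
    moreover have "bump i0" using i0 j0 by (simp add: bump_def min_def)
    ultimately show ?thesis by simp
  qed
  ultimately show thesis using that by blast
qed

lemma maximal_feasible_above:
  assumes a_ne: "a \<noteq> []" and a_len: "length a \<le> n" and a_sorted: "sorted_wrt (\<ge>) a"
    and a_q: "a ! 0 \<le> q" and k: "k < sum_list a"
    and B0: "pre_feasible q a n B0" and B0_overlap: "min_overlap a B0 \<le> k"
  obtains B where "B \<in> maximal_feasible q k a n" "\<And>i. i < n \<Longrightarrow> B0 ! i \<le> B ! i"
proof -
  let ?P = "\<lambda>B. pre_feasible q a n B \<and> min_overlap a B \<le> k \<and> (\<forall>i<n. B0 ! i \<le> B ! i)"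
  have "\<forall>B. ?P B \<longrightarrow> sum_list B < Suc (n * q)"
    using pre_feasible_sum_list_le le_imp_less_Suc by blast
  then obtain B where P: "?P B" and greatest: "\<And>B'. ?P B' \<Longrightarrow> sum_list B' \<le> sum_list B"
    using ex_has_greatest_nat[of ?P B0 sum_list] B0 B0_overlap by blast
  have "min_overlap a B = k"
  proof (rule ccontr)
    assume "min_overlap a B \<noteq> k"
    then have "min_overlap a B < sum_list a" using P k by simp
    then obtain B' where B': "pre_feasible q a n B'" "min_overlap a B' \<le> Suc (min_overlap a B)"
        "\<And>i. i < n \<Longrightarrow> B ! i \<le> B' ! i" "sum_list B < sum_list B'"
      using pre_feasible_increment[OF a_ne a_len a_sorted a_q] P by blast
    have "?P B'"
      using B' P \<open>min_overlap a B \<noteq> k\<close> by (force intro: le_trans)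
    then show False using greatest B'(4) by fastforce
  qed
  then have feasible: "feasible q k a n B"
    using P feasible_iff_pre_feasible[OF a_q] by blast
  have "B \<in> maximal_feasible q k a n"
    unfolding maximal_feasible_def
  proof (intro CollectI conjI notI feasible)
    assume "\<exists>B'. feasible q k a n B' \<and> dominates B' B"
    then obtain B' where B': "feasible q k a n B'" "dominates B' B" by blast
    have "length B = n" using P unfolding pre_feasible_def by blast
    then have "?P B'"
      using B' P feasible_iff_pre_feasible[OF a_q] unfolding dominates_def by (force intro: le_trans)
    then show False using greatest B'(2) unfolding dominates_def by fastforce
  qed
  then show thesis using that P by blast
qed

lemma finite_maximal_feasible:
  assumes "a ! 0 \<le> q"
  shows "finite (maximal_feasible q k a n)"
proof (rule finite_subset)
  show "maximal_feasible q k a n \<subseteq> {xs. set xs \<subseteq> {..q} \<and> length xs = n}"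
  proof
    fix B assume "B \<in> maximal_feasible q k a n"
    then have B: "pre_feasible q a n B"
      using feasible_iff_pre_feasible[OF assms] unfolding maximal_feasible_def by blast
    then have "length B = n" unfolding pre_feasible_def by blast
    moreover have "set B \<subseteq> {..q}"
      using pre_feasible_le[OF B] \<open>length B = n\<close> by (auto simp: in_set_conv_nth)
    ultimately show "B \<in> {xs. set xs \<subseteq> {..q} \<and> length xs = n}" by simp
  qed
  show "finite {xs. set xs \<subseteq> {..q} \<and> length xs = n}"
    by (rule finite_lists_length_eq) simp
qed

section \<open>The two bounds\<close>

lemma k_independent_of_feasible:
  assumes a_sorted: "sorted_wrt (\<ge>) a" and a_len: "length a \<le> n" and a_q: "a ! 0 \<le> q"
    and k: "k < sum_list a" and B: "feasible q k a n B"
  obtains S where "S \<subseteq> sigma_vertices n q" "k_independent (sigma_edges n q a) k S"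
    "card S = seq_value n q a B"
proof -
  have pB: "pre_feasible q a n B" and overlap: "min_overlap a B = k"
    using B feasible_iff_pre_feasible[OF a_q] by auto
  then have deficit: "min_overlap a B < sum_list a" using k by simp
  let ?c = "saturated q a B"
  define S where "S = {(Suc j, x) | j x. j < n \<and> x < ?c j}"
  have S_class: "S \<inter> vclass q (Suc j) = {Suc j} \<times> {..<?c j}" if "j < n" for j
    using saturated_le[OF pB that] that by (auto simp: S_def vclass_def)
  have S_sub: "S \<subseteq> sigma_vertices n q"
    using saturated_le[OF pB] by (fastforce simp: S_def sigma_vertices_def)
  have "card S = (\<Sum>j<n. ?c j)"
    using card_eq_sum_vclass[OF S_sub bij_betw_Suc_lessThan] S_class
    by (simp add: card_cartesian_product)
  also have "\<dots> = seq_value n q a B"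
    using seq_value_eq_sum_saturated[OF pB a_len deficit] by simp
  finally have card_S: "card S = seq_value n q a B" .
  have "k_independent (sigma_edges n q a) k S"
    unfolding k_independent_def
  proof
    fix E assume E: "E \<in> sigma_edges n q a"
    have "card (E \<inter> S) \<le> (\<Sum>j<length a. min (a ! j) (?c j))"
      by (rule edge_overlap_le[OF E a_sorted a_len])
        (simp_all add: S_class card_cartesian_product saturated_antimono[OF pB])
    also have "\<dots> = k"
      using min_overlap_saturated[OF a_sorted a_q deficit] overlap by simp
    finally show "card (E \<inter> S) \<le> k" .
  qed
  then show thesis using that S_sub card_S by blast
qed

definition freeze_tail :: "nat \<Rightarrow> nat \<Rightarrow> (nat \<Rightarrow> nat) \<Rightarrow> nat list" where
  "freeze_tail s n d = map (\<lambda>j. d (min j (s - 1))) [0..<n]"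

lemma freeze_tail_nth: "j < n \<Longrightarrow> freeze_tail s n d ! j = d (min j (s - 1))"
  by (simp add: freeze_tail_def)

lemma pre_feasible_freeze_tail:
  assumes "a \<noteq> []" "length a \<le> n" "d 0 \<le> q"
    and d_antimono: "\<And>i j. i \<le> j \<Longrightarrow> j < n \<Longrightarrow> d j \<le> d i"
  shows "pre_feasible q a n (freeze_tail (length a) n d)"
  unfolding pre_feasible_def sorted_wrt_iff_nth_less
proof (intro conjI allI impI)
  show "length (freeze_tail (length a) n d) = n" by (simp add: freeze_tail_def)
  show "freeze_tail (length a) n d ! j \<le> freeze_tail (length a) n d ! i"
    if "i < j" "j < length (freeze_tail (length a) n d)" for i j
    using that d_antimono[of "min i (length a - 1)" "min j (length a - 1)"]
    by (simp add: freeze_tail_def)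
  show "freeze_tail (length a) n d ! j = freeze_tail (length a) n d ! (length a - 1)"
    if "length a - 1 \<le> j \<and> j < n" for j
    using that assms(1,2) by (simp add: freeze_tail_nth Suc_le_eq)
  have "0 < n" using assms(1,2) by (cases a) auto
  then show "freeze_tail (length a) n d ! 0 \<le> q"
    using assms(3) by (simp add: freeze_tail_nth)
qed

lemma min_overlap_freeze_tail:
  assumes "length a \<le> n"
  shows "min_overlap a (freeze_tail (length a) n d) = (\<Sum>j<length a. min (a ! j) (d j))"
  unfolding min_overlap_def using assms by (intro sum.cong) (auto simp: freeze_tail_nth)

lemma sum_le_seq_value_freeze_tail:
  assumes a_ne: "a \<noteq> []" and a_len: "length a \<le> n"
    and d_le: "\<And>j. d j \<le> q" and d_antimono: "\<And>i j. i \<le> j \<Longrightarrow> j < n \<Longrightarrow> d j \<le> d i"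
    and deficit: "min_overlap a (freeze_tail (length a) n d) < sum_list a"
  shows "(\<Sum>j<n. d j) \<le> seq_value n q a (freeze_tail (length a) n d)"
proof -
  let ?B = "freeze_tail (length a) n d"
  have B: "pre_feasible q a n ?B"
    using pre_feasible_freeze_tail[OF a_ne a_len d_le d_antimono] .
  have "(\<Sum>j<n. d j) \<le> (\<Sum>j<n. saturated q a ?B j)"
  proof (rule sum_mono)
    fix j assume "j \<in> {..<n}"
    then have "d j \<le> ?B ! j"
      using d_antimono[of "min j (length a - 1)" j] by (simp add: freeze_tail_nth)
    then show "d j \<le> saturated q a ?B j"
      using d_le by (simp add: saturated_def)
  qed
  also have "\<dots> = seq_value n q a ?B"
    using seq_value_eq_sum_saturated[OF B a_len deficit] by simp
  finally show ?thesis .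
qed

lemma k_independent_le_seq_value:
  assumes a_ne: "a \<noteq> []" and a_len: "length a \<le> n" and a_sorted: "sorted_wrt (\<ge>) a"
    and a_pos: "\<forall>x\<in>set a. 1 \<le> x" and a_q: "a ! 0 \<le> q" and k: "k < sum_list a"
    and S: "S \<subseteq> sigma_vertices n q" and S_indep: "k_independent (sigma_edges n q a) k S"
  obtains B where "B \<in> maximal_feasible q k a n" "card S \<le> seq_value n q a B"
proof -
  obtain I where I: "bij_betw I {..<n} {1..n}"
    and sorted: "\<And>i j. i \<le> j \<Longrightarrow> j < n \<Longrightarrow> card (S \<inter> vclass q (I j)) \<le> card (S \<inter> vclass q (I i))"
    using obtain_sorting_bijection[of n "\<lambda>i. card (S \<inter> vclass q i)"] by blast
  define d where "d j = card (S \<inter> vclass q (I j))" for j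
  have d_antimono: "\<And>i j. i \<le> j \<Longrightarrow> j < n \<Longrightarrow> d j \<le> d i"
    using sorted by (simp add: d_def)
  define Bd where "Bd = freeze_tail (length a) n d"
  have a_le_q: "a ! j \<le> q" if "j < length a" for j
    using sorted_wrt_ge_nth_antimono[OF a_sorted, of 0 j] that a_q by simp
  obtain E where "E \<in> sigma_edges n q a" "card (E \<inter> S) = (\<Sum>j<length a. min (a ! j) (d j))"
    using obtain_edge_meeting[OF I a_len a_pos a_le_q] unfolding d_def by blast
  then have Bd_overlap: "min_overlap a Bd \<le> k"
    using S_indep min_overlap_freeze_tail[OF a_len] unfolding k_independent_def Bd_def by auto
  have d_le: "d j \<le> q" for j
    by (simp add: d_def card_Int_vclass_le)
  have Bd: "pre_feasible q a n Bd"
    unfolding Bd_def by (rule pre_feasible_freeze_tail[OF a_ne a_len d_le d_antimono])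
  obtain B where B: "B \<in> maximal_feasible q k a n" and Bd_le: "\<And>i. i < n \<Longrightarrow> Bd ! i \<le> B ! i"
    using maximal_feasible_above[OF a_ne a_len a_sorted a_q k Bd Bd_overlap] by blast
  have pB: "pre_feasible q a n B" and "min_overlap a B = k"
    using B feasible_iff_pre_feasible[OF a_q] unfolding maximal_feasible_def by auto
  then have B_deficit: "min_overlap a B < sum_list a" using k by simp
  have Bd_deficit: "min_overlap a Bd < sum_list a" using Bd_overlap k by simp
  have "card S = (\<Sum>j<n. d j)"
    using card_eq_sum_vclass[OF S I] by (simp add: d_def)
  also have "\<dots> \<le> seq_value n q a Bd"
    using sum_le_seq_value_freeze_tail[OF a_ne a_len d_le d_antimono Bd_deficit[unfolded Bd_def]]
    by (simp add: Bd_def)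
  also have "\<dots> \<le> seq_value n q a B"
    by (rule seq_value_mono[OF Bd pB a_len Bd_deficit B_deficit Bd_le])
  finally show thesis using that B by blast
qed

lemma maximal_feasible_nonempty:
  assumes "a \<noteq> []" "length a \<le> n" "sorted_wrt (\<ge>) a" "a ! 0 \<le> q" "k < sum_list a"
  shows "maximal_feasible q k a n \<noteq> {}"
proof -
  have "0 < n" using assms(1,2) by (cases a) auto
  then have "pre_feasible q a n (replicate n 0)" "min_overlap a (replicate n 0) \<le> k"
    using assms(2) by (auto simp: pre_feasible_def min_overlap_def sorted_wrt_iff_nth_less)
  then show ?thesis
    using maximal_feasible_above[OF assms] by blast
qed

theorem theorem2p8:
  fixes a :: "nat list" and n q k r s :: nat
  assumes "a \<noteq> []"
    and "sorted_wrt (\<ge>) a"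
    and "\<forall>x\<in>set a. 1 \<le> x"
    and "r = sum_list a"
    and "s = length a"
    and "s \<le> n"
    and "a ! 0 \<le> q"
    and "1 \<le> k" and "k \<le> r - 1"
  shows "alpha_k k (sigma_vertices n q) (sigma_edges n q a)
           = Max {seq_value n q a B | B. B \<in> maximal_feasible q k a n}"
proof -
  have a_len: "length a \<le> n" and k: "k < sum_list a" using assms by auto
  let ?sizes = "{card S | S. S \<subseteq> sigma_vertices n q \<and> k_independent (sigma_edges n q a) k S}"
  let ?values = "{seq_value n q a B | B. B \<in> maximal_feasible q k a n}"
  show ?thesis
    unfolding alpha_k_def
  proof (rule Max_eq_if_cofinal)
    show "finite ?sizes"
      by (rule finite_subset[of _ "card ` Pow (sigma_vertices n q)"]) (auto simp: sigma_vertices_def)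
    show "finite ?values"
      using finite_maximal_feasible[OF assms(7)] by (simp add: setcompr_eq_image)
    show "?values \<noteq> {}"
      using maximal_feasible_nonempty[OF assms(1) a_len assms(2,7) k] by blast
  next
    fix x assume "x \<in> ?sizes"
    then obtain S where S: "x = card S" "S \<subseteq> sigma_vertices n q" "k_independent (sigma_edges n q a) k S"
      by blast
    obtain B where "B \<in> maximal_feasible q k a n" "card S \<le> seq_value n q a B"
      by (rule k_independent_le_seq_value[OF assms(1) a_len assms(2,3,7) k S(2,3)])
    then show "\<exists>y\<in>?values. x \<le> y"
      using S(1) by (intro bexI[of _ "seq_value n q a B"]) auto
  next
    fix y assume "y \<in> ?values"
    then obtain B where B: "y = seq_value n q a B" "feasible q k a n B"
      unfolding maximal_feasible_def by blast
    obtain S where S: "S \<subseteq> sigma_vertices n q" "k_independent (sigma_edges n q a) k S"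
        "card S = seq_value n q a B"
      by (rule k_independent_of_feasible[OF assms(2) a_len assms(7) k B(2)])
    then have "card S \<in> ?sizes" by blast
    then show "\<exists>x\<in>?sizes. y \<le> x"
      using B(1) S(3) by (intro bexI[of _ "card S"]) simp_all
  qed
qed

end
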